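(* Let $p,q$ be nonzero integers such that $q$ does not divide $2p$. Then the group $G_{p,q}=\langle a,b,s,t\mid [a,b],\ s^{-1}a^qs=a^pb,\ t^{-1}a^qt=a^pb^{-1}\rangle$ is not residually finite. *)

theory Defs
  imports "HOL-Algebra.Algebra"
begin

datatype gen = GA | GB | GS | GT

text \<open>A letter is a generator together with a flag; True means the inverse of the generator.\<close>
type_synonym letter = "gen \<times> bool"

fun inv_letter :: "letter \<Rightarrow> letter" where
  "inv_letter (g, e) = (g, \<not> e)"

fun push :: "letter \<Rightarrow> letter list \<Rightarrow> letter list" where
  "push x [] = [x]"
| "push x (y # ys) = (if y = inv_letter x then ys else x # y # ys)"

definition reduce :: "letter list \<Rightarrow> letter list" where
  "reduce w = foldr push w []"

definition reduced :: "letter list \<Rightarrow> bool" where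
  "reduced w \<longleftrightarrow> (\<forall>i. Suc i < length w \<longrightarrow> w ! Suc i \<noteq> inv_letter (w ! i))"

definition free_grp :: "letter list monoid" where
  "free_grp = \<lparr>carrier = {w. reduced w}, monoid.mult = (\<lambda>x y. reduce (x @ y)), one = []\<rparr>"

definition inv_word :: "letter list \<Rightarrow> letter list" where
  "inv_word w = rev (map inv_letter w)"

definition gpow :: "gen \<Rightarrow> int \<Rightarrow> letter list" where
  "gpow g k = (if 0 \<le> k then replicate (nat k) (g, False) else replicate (nat (- k)) (g, True))"

definition relators :: "int \<Rightarrow> int \<Rightarrow> letter list set" where
  "relators p q =
    { reduce [(GA, True), (GB, True), (GA, False), (GB, False)],
      reduce ([(GS, True)] @ gpow GA q @ [(GS, False)] @ inv_word (gpow GA p @ [(GB, False)])),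
      reduce ([(GT, True)] @ gpow GA q @ [(GT, False)] @ inv_word (gpow GA p @ [(GB, True)])) }"

definition normal_closure :: "('a, 'b) monoid_scheme \<Rightarrow> 'a set \<Rightarrow> 'a set" where
  "normal_closure G R =
     generate G (\<Union>g\<in>carrier G. (\<lambda>r. g \<otimes>\<^bsub>G\<^esub> r \<otimes>\<^bsub>G\<^esub> inv\<^bsub>G\<^esub> g) ` R)"

definition G_pq :: "int \<Rightarrow> int \<Rightarrow> letter list set monoid" where
  "G_pq p q = free_grp Mod normal_closure free_grp (relators p q)"

definition residually_finite :: "('a, 'b) monoid_scheme \<Rightarrow> bool" where
  "residually_finite G \<longleftrightarrow>
     (\<forall>x\<in>carrier G. x \<noteq> \<one>\<^bsub>G\<^esub> \<longrightarrow>
        (\<exists>N. N \<lhd> G \<and> finite (rcosets\<^bsub>G\<^esub> N) \<and> x \<notin> N))"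

end

theory Submission
  imports Defs
begin

text \<open>Let \<open>g = gcd q (2p)\<close>. In a finite quotient the image of \<open>a\<close> has finite order, and
  conjugating \<open>a\<^sup>q\<^sup>n = 1\<close> by \<open>s\<close> and by \<open>t\<close> gives \<open>(a\<^sup>pb)\<^sup>n = (a\<^sup>pb\<^sup>-\<^sup>1)\<^sup>n = 1\<close>, hence
  \<open>a\<^sup>2\<^sup>p\<^sup>n = 1\<close>. So every exponent killing \<open>a\<^sup>q\<close> kills \<open>a\<^sup>g\<close>, which makes \<open>a\<^sup>g\<close> a power of \<open>a\<^sup>q\<close>;
  its \<open>s\<close>-conjugate is then a power of \<open>a\<^sup>pb\<close> and commutes with \<open>a\<close>. Thus the commutator
  \<open>[s\<^sup>-\<^sup>1a\<^sup>gs, a]\<close> dies in every finite quotient. It is nontrivial in \<open>G_pq\<close>: the group acts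
  on \<open>\<int>\<^sup>2\<close> with \<open>a\<close>, \<open>b\<close> the unit translations and \<open>s\<close>, \<open>t\<close> bijections conjugating the
  translation by \<open>(q, 0)\<close> into those by \<open>(p, \<plusminus>1)\<close>, and for \<open>0 < g < |q|\<close>, i.e. when \<open>q\<close>
  does not divide \<open>2p\<close>, the commutator acts nontrivially.\<close>

section \<open>Reduced words form a group\<close>

lemma inv_letter_inv_letter [simp]: "inv_letter (inv_letter x) = x"
  by (cases x) auto

lemma reduced_Nil [simp]: "reduced []"
  and reduced_single [simp]: "reduced [x]"
  by (auto simp: reduced_def)

lemma reduced_Cons_Cons: "reduced (x # y # ys) \<longleftrightarrow> y \<noteq> inv_letter x \<and> reduced (y # ys)"
proof
  assume "reduced (x # y # ys)"
  then show "y \<noteq> inv_letter x \<and> reduced (y # ys)"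
    unfolding reduced_def by (metis Suc_less_eq length_Cons nth_Cons_0 nth_Cons_Suc zero_less_Suc)
next
  assume "y \<noteq> inv_letter x \<and> reduced (y # ys)"
  then show "reduced (x # y # ys)"
    unfolding reduced_def by (auto simp: less_Suc_eq_0_disj)
qed

lemma reduced_ConsD: "reduced (x # ys) \<Longrightarrow> reduced ys"
  by (cases ys) (auto simp: reduced_Cons_Cons)

lemma reduced_push: "reduced w \<Longrightarrow> reduced (push x w)"
  by (cases w) (auto simp: reduced_Cons_Cons dest: reduced_ConsD)

lemma reduced_foldr_push: "reduced z \<Longrightarrow> reduced (foldr push w z)"
  by (induction w) (auto intro: reduced_push)

lemma reduced_reduce [simp]: "reduced (reduce w)"
  unfolding reduce_def by (rule reduced_foldr_push) simp

lemma push_inv_letter_push: "reduced w \<Longrightarrow> push (inv_letter x) (push x w) = w"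
  by (cases w rule: remdups_adj.cases) (auto simp: reduced_Cons_Cons)

lemma foldr_push_push:
  assumes "reduced z"
  shows "foldr push (push x w) z = push x (foldr push w z)"
proof (cases w)
  case (Cons y ys)
  have "reduced (foldr push ys z)" using assms by (rule reduced_foldr_push)
  then show ?thesis
    using Cons push_inv_letter_push[of _ y] by auto
qed simp

lemma reduce_Cons: "reduce (x # w) = push x (reduce w)"
  by (simp add: reduce_def)

lemma reduce_append: "reduce (x @ y) = foldr push x (reduce y)"
  by (simp add: reduce_def)

lemma foldr_push_reduce: "reduced z \<Longrightarrow> foldr push (reduce x) z = foldr push x z"
  by (induction x) (simp_all add: reduce_Cons foldr_push_push, simp add: reduce_def)

lemma reduce_reduced: "reduced w \<Longrightarrow> reduce w = w"
proof (induction w)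
  case (Cons x xs)
  then have "reduce xs = xs" using reduced_ConsD by blast
  then show ?case
    using Cons.prems by (cases xs) (auto simp: reduce_Cons reduced_Cons_Cons)
qed (simp add: reduce_def)

lemma reduce_reduce_append: "reduce (reduce x @ y) = reduce (x @ y)"
  by (simp add: reduce_append foldr_push_reduce)

lemma reduce_append_reduce: "reduce (x @ reduce y) = reduce (x @ y)"
  by (simp add: reduce_append reduce_reduced)

lemma reduce_inv_word_append: "reduce (inv_word w @ w) = []"
proof -
  have "foldr push (inv_word w) (foldr push w z) = z" if "reduced z" for z
    using that
    by (induction w) (simp_all add: inv_word_def push_inv_letter_push reduced_foldr_push)
  then show ?thesis by (simp add: reduce_def)
qed

lemma carrier_free_grp: "carrier free_grp = {w. reduced w}"
  and mult_free_grp: "x \<otimes>\<^bsub>free_grp\<^esub> y = reduce (x @ y)"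
  and one_free_grp: "\<one>\<^bsub>free_grp\<^esub> = []"
  by (simp_all add: free_grp_def)

lemma group_free_grp: "group free_grp"
proof (rule groupI)
  fix x assume "x \<in> carrier free_grp"
  then show "\<exists>y\<in>carrier free_grp. y \<otimes>\<^bsub>free_grp\<^esub> x = \<one>\<^bsub>free_grp\<^esub>"
    by (intro bexI[of _ "reduce (inv_word x)"])
       (simp_all add: one_free_grp mult_free_grp carrier_free_grp reduce_reduce_append
         reduce_inv_word_append)
qed (simp_all add: carrier_free_grp mult_free_grp one_free_grp reduce_reduced
       reduce_reduce_append reduce_append_reduce)

lemma inv_free_grp: "reduced x \<Longrightarrow> inv\<^bsub>free_grp\<^esub> x = reduce (inv_word x)"
  by (rule group.inv_equality[OF group_free_grp])
     (simp_all add: one_free_grp mult_free_grp carrier_free_grp reduce_reduce_append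
       reduce_inv_word_append)

section \<open>Evaluating words in a group\<close>

definition letter_val :: "('a, 'b) monoid_scheme \<Rightarrow> (gen \<Rightarrow> 'a) \<Rightarrow> letter \<Rightarrow> 'a" where
  "letter_val G h l = (if snd l then inv\<^bsub>G\<^esub> h (fst l) else h (fst l))"

definition word_val :: "('a, 'b) monoid_scheme \<Rightarrow> (gen \<Rightarrow> 'a) \<Rightarrow> letter list \<Rightarrow> 'a" where
  "word_val G h w = foldr (\<lambda>l x. letter_val G h l \<otimes>\<^bsub>G\<^esub> x) w \<one>\<^bsub>G\<^esub>"

lemma word_val_Nil [simp]: "word_val G h [] = \<one>\<^bsub>G\<^esub>"
  and word_val_Cons [simp]: "word_val G h (l # w) = letter_val G h l \<otimes>\<^bsub>G\<^esub> word_val G h w"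
  by (simp_all add: word_val_def)

lemma letter_val_simps [simp]:
  "letter_val G h (g, False) = h g"
  "letter_val G h (g, True) = inv\<^bsub>G\<^esub> h g"
  by (simp_all add: letter_val_def)

context group
begin

lemma letter_val_closed [simp]: "range h \<subseteq> carrier G \<Longrightarrow> letter_val G h l \<in> carrier G"
  by (auto simp: letter_val_def)

lemma word_val_closed [simp]: "range h \<subseteq> carrier G \<Longrightarrow> word_val G h w \<in> carrier G"
  by (induction w) simp_all

lemma word_val_append [simp]:
  "range h \<subseteq> carrier G \<Longrightarrow> word_val G h (u @ w) = word_val G h u \<otimes> word_val G h w"
  by (induction u) (simp_all add: m_assoc)

lemma letter_val_inv_letter:
  "range h \<subseteq> carrier G \<Longrightarrow> letter_val G h (inv_letter l) = inv (letter_val G h l)"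
  by (cases l) (auto simp: letter_val_def image_subset_iff)

lemma word_val_push:
  assumes "range h \<subseteq> carrier G"
  shows "word_val G h (push l w) = letter_val G h l \<otimes> word_val G h w"
proof (cases w)
  case (Cons y ys)
  then show ?thesis
    using assms by (auto simp: letter_val_inv_letter m_assoc[symmetric])
qed simp

lemma word_val_reduce [simp]: "range h \<subseteq> carrier G \<Longrightarrow> word_val G h (reduce w) = word_val G h w"
  by (induction w) (simp_all add: reduce_Cons word_val_push, simp add: reduce_def)

lemma word_val_inv_word:
  assumes "range h \<subseteq> carrier G"
  shows "word_val G h (inv_word w) = inv (word_val G h w)"
proof (rule inv_equality[symmetric])
  show "word_val G h (inv_word w) \<otimes> word_val G h w = \<one>"
    using assms word_val_reduce[OF assms, of "inv_word w @ w"]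
    by (simp add: reduce_inv_word_append)
qed (simp_all add: assms)

lemma word_val_hom: "range h \<subseteq> carrier G \<Longrightarrow> word_val G h \<in> hom free_grp G"
  by (rule homI) (simp_all add: mult_free_grp)

lemma word_val_gpow:
  assumes h: "range h \<subseteq> carrier G"
  shows "word_val G h (gpow g k) = h g [^] k"
proof -
  have hg: "h g \<in> carrier G" using h by auto
  have rep: "word_val G h (replicate n l) = letter_val G h l [^] n" for n l
  proof (induction n)
    case (Suc n)
    have "word_val G h (replicate (Suc n) l) = letter_val G h l \<otimes> letter_val G h l [^] n"
      using Suc by simp
    also have "\<dots> = letter_val G h l [^] Suc n"
      using h by (rule nat_pow_Suc2[symmetric, OF letter_val_closed])
    finally show ?case .
  qed simp
  show ?thesis
  proof (cases "0 \<le> k")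
    case True
    then have "gpow g k = replicate (nat k) (g, False)" by (simp add: gpow_def)
    then have "word_val G h (gpow g k) = h g [^] int (nat k)"
      by (simp only: rep letter_val_simps int_pow_int)
    then show ?thesis using True by simp
  next
    case False
    then have "gpow g k = replicate (nat (- k)) (g, True)" by (simp add: gpow_def)
    then have "word_val G h (gpow g k) = inv h g [^] nat (- k)"
      by (simp only: rep letter_val_simps)
    also have "\<dots> = h g [^] (- int (nat (- k)))"
      using hg by (simp only: nat_pow_inv int_pow_neg_int)
    also have "\<dots> = h g [^] k"
      using False by simp
    finally show ?thesis .
  qed
qed

end

lemma word_val_free_grp_generators:
  "reduced w \<Longrightarrow> word_val free_grp (\<lambda>g. [(g, False)]) w = w"
proof (induction w)
  case (Cons l w)
  have "reduced w" using Cons.prems by (rule reduced_ConsD)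
  moreover have "letter_val free_grp (\<lambda>g. [(g, False)]) l = [l]"
    by (cases l) (auto simp: letter_val_def inv_free_grp inv_word_def reduce_def)
  ultimately show ?case
    using Cons reduce_reduced[of "l # w"] by (simp add: mult_free_grp)
qed (simp add: one_free_grp)

lemma hom_word_val:
  assumes "group G" "group H" "\<phi> \<in> hom G H" "range h \<subseteq> carrier G"
  shows "\<phi> (word_val G h w) = word_val H (\<phi> \<circ> h) w"
proof -
  interpret group_hom G H \<phi> using assms by (simp add: group_hom_def group_hom_axioms_def)
  show ?thesis
    using assms(4) by (induction w) (auto simp: letter_val_def image_subset_iff)
qed

lemma hom_free_grp_eq_word_val:
  assumes "group H" "\<phi> \<in> hom free_grp H" "reduced w"
  shows "\<phi> w = word_val H (\<lambda>g. \<phi> [(g, False)]) w"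
  using hom_word_val[OF group_free_grp assms(1,2), of "\<lambda>g. [(g, False)]" w] assms(3)
  by (simp add: carrier_free_grp word_val_free_grp_generators comp_def image_subset_iff)

section \<open>Normal closures\<close>

context group
begin

lemma conjugation_hom: "x \<in> carrier G \<Longrightarrow> (\<lambda>h. x \<otimes> h \<otimes> inv x) \<in> hom G G"
  by (rule homI) (simp_all add: m_assoc, simp add: m_assoc[symmetric])

lemma normal_closure_normal:
  assumes "R \<subseteq> carrier G"
  shows "normal_closure G R \<lhd> G"
proof -
  define C where "C = (\<Union>g\<in>carrier G. (\<lambda>r. g \<otimes> r \<otimes> inv g) ` R)"
  have C: "C \<subseteq> carrier G" using assms by (auto simp: C_def)
  have "x \<otimes> h \<otimes> inv x \<in> generate G C" if x: "x \<in> carrier G" and h: "h \<in> generate G C" for x h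
  proof -
    interpret conj: group_hom G G "\<lambda>h. x \<otimes> h \<otimes> inv x"
      using conjugation_hom[OF x] by (simp add: group_hom_def group_hom_axioms_def is_group)
    have "(\<lambda>h. x \<otimes> h \<otimes> inv x) ` C \<subseteq> C"
    proof
      fix c assume "c \<in> (\<lambda>h. x \<otimes> h \<otimes> inv x) ` C"
      then obtain g r where g: "g \<in> carrier G" and r: "r \<in> R"
        and c: "c = x \<otimes> (g \<otimes> r \<otimes> inv g) \<otimes> inv x"
        by (auto simp: C_def)
      have "c = (x \<otimes> g) \<otimes> r \<otimes> inv (x \<otimes> g)"
        using x g r assms by (auto simp: c m_assoc inv_mult_group)
      then show "c \<in> C"
        unfolding C_def using x g r by (intro UN_I[of "x \<otimes> g"]) auto
    qed
    then have "(\<lambda>h. x \<otimes> h \<otimes> inv x) ` generate G C \<subseteq> generate G C"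
      using conj.generate_img[OF C] mono_generate by metis
    then show ?thesis using h by blast
  qed
  then show ?thesis
    unfolding normal_inv_iff normal_closure_def C_def[symmetric]
    using generate_is_subgroup[OF C] by blast
qed

lemma normal_closure_subset_normal:
  assumes "N \<lhd> G" "R \<subseteq> N"
  shows "normal_closure G R \<subseteq> N"
  unfolding normal_closure_def
proof (rule generate_subgroup_incl)
  show "subgroup N G" using assms(1) by (rule normal_imp_subgroup)
  show "(\<Union>g\<in>carrier G. (\<lambda>r. g \<otimes> r \<otimes> inv g) ` R) \<subseteq> N"
    using assms by (auto intro: normal.inv_op_closed2)
qed

lemma subset_normal_closure:
  assumes "R \<subseteq> carrier G"
  shows "R \<subseteq> normal_closure G R"
proof
  fix r assume "r \<in> R"
  then have "r = \<one> \<otimes> r \<otimes> inv \<one>" "r \<in> carrier G" using assms by auto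
  then show "r \<in> normal_closure G R"
    unfolding normal_closure_def using \<open>r \<in> R\<close> by (blast intro: generate.incl)
qed

end

definition Gpq_relations ::
    "('a, 'b) monoid_scheme \<Rightarrow> int \<Rightarrow> int \<Rightarrow> 'a \<Rightarrow> 'a \<Rightarrow> 'a \<Rightarrow> 'a \<Rightarrow> bool" where
  "Gpq_relations G p q a b s t \<longleftrightarrow>
     a \<otimes>\<^bsub>G\<^esub> b = b \<otimes>\<^bsub>G\<^esub> a \<and>
     inv\<^bsub>G\<^esub> s \<otimes>\<^bsub>G\<^esub> a [^]\<^bsub>G\<^esub> q \<otimes>\<^bsub>G\<^esub> s = a [^]\<^bsub>G\<^esub> p \<otimes>\<^bsub>G\<^esub> b \<and>
     inv\<^bsub>G\<^esub> t \<otimes>\<^bsub>G\<^esub> a [^]\<^bsub>G\<^esub> q \<otimes>\<^bsub>G\<^esub> t = a [^]\<^bsub>G\<^esub> p \<otimes>\<^bsub>G\<^esub> inv\<^bsub>G\<^esub> b"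

lemma relators_reduced: "r \<in> relators p q \<Longrightarrow> reduced r"
  by (auto simp: relators_def)

lemma relators_subset_carrier: "relators p q \<subseteq> carrier free_grp"
  using relators_reduced by (auto simp: carrier_free_grp)

context group
begin

lemma commutator_eq_one_iff:
  assumes "x \<in> carrier G" "y \<in> carrier G"
  shows "inv x \<otimes> (inv y \<otimes> (x \<otimes> y)) = \<one> \<longleftrightarrow> x \<otimes> y = y \<otimes> x"
proof -
  have "inv x \<otimes> (inv y \<otimes> (x \<otimes> y)) = inv (y \<otimes> x) \<otimes> (x \<otimes> y)"
    using assms by (simp add: inv_mult_group m_assoc)
  then show ?thesis
    using assms by (metis inv_closed l_inv l_one m_closed inv_solve_left)
qed

lemma conjugate_relator_eq_one_iff:
  assumes "s \<in> carrier G" "x \<in> carrier G" "y \<in> carrier G"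
  shows "inv s \<otimes> (x \<otimes> (s \<otimes> inv y)) = \<one> \<longleftrightarrow> inv s \<otimes> x \<otimes> s = y"
  using assms inv_solve_right'[of \<one> "inv s \<otimes> x \<otimes> s" y] by (simp add: m_assoc)

lemma word_val_relators_iff:
  assumes h: "range h \<subseteq> carrier G"
  shows "(\<forall>r\<in>relators p q. word_val G h r = \<one>)
    \<longleftrightarrow> Gpq_relations G p q (h GA) (h GB) (h GS) (h GT)"
proof -
  have c: "h g \<in> carrier G" for g using h by auto
  have conj_rel:
    "word_val G h (reduce ([(g, True)] @ gpow GA q @ [(g, False)] @ inv_word (gpow GA p @ [l]))) = \<one>
      \<longleftrightarrow> inv h g \<otimes> h GA [^] q \<otimes> h g = h GA [^] p \<otimes> letter_val G h l" for g l
    using h c by (simp add: word_val_inv_word word_val_gpow conjugate_relator_eq_one_iff)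
  have comm_rel: "word_val G h (reduce [(GA, True), (GB, True), (GA, False), (GB, False)]) = \<one>
      \<longleftrightarrow> h GA \<otimes> h GB = h GB \<otimes> h GA"
    using h c by (simp add: commutator_eq_one_iff)
  show ?thesis
    by (simp only: relators_def ball_simps Gpq_relations_def comm_rel conj_rel letter_val_simps
        simp_thms)
qed

end

section \<open>Finite quotients\<close>

context group
begin

lemma conj_int_pow:
  assumes "s \<in> carrier G" "z \<in> carrier G"
  shows "(inv s \<otimes> z \<otimes> s) [^] (n::int) = inv s \<otimes> z [^] n \<otimes> s"
  using hom_int_pow[OF conjugation_hom[of "inv s"] assms(2) is_group is_group, of n] assms
  by simp

lemma conj_eq_iff:
  assumes "s \<in> carrier G" "x \<in> carrier G" "y \<in> carrier G"
  shows "inv s \<otimes> x \<otimes> s = y \<longleftrightarrow> x \<otimes> s = s \<otimes> y"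
  using assms by (metis inv_closed inv_solve_left m_assoc m_closed)

lemma int_pow_commutes:
  assumes "x \<otimes> y = y \<otimes> x" "x \<in> carrier G" "y \<in> carrier G"
  shows "x [^] (i::int) \<otimes> y = y \<otimes> x [^] i"
proof -
  have "inv y \<otimes> x \<otimes> y = x"
    using assms by (metis inv_closed l_inv l_one m_assoc)
  then have "inv y \<otimes> x [^] i \<otimes> y = x [^] i"
    using conj_int_pow[OF assms(3,2), of i] by simp
  then show ?thesis
    using assms by (metis int_pow_closed inv_solve_left m_assoc m_closed inv_closed)
qed

lemma int_pow_in_powers_of_int_pow:
  fixes q r :: int
  assumes x: "x \<in> carrier G" and ord: "ord x \<noteq> 0"
    and ann: "\<And>n. x [^] (q * n) = \<one> \<Longrightarrow> x [^] (r * n) = \<one>"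
  shows "\<exists>k::int. x [^] r = (x [^] q) [^] k"
proof -
  define m where "m = int (ord x)"
  define d where "d = gcd m q"
  define n where "n = m div d"
  have "m > 0" using ord by (simp add: m_def)
  have m: "m = d * n" by (simp add: n_def d_def)
  have "d > 0" using \<open>m > 0\<close> by (simp add: d_def)
  then have "n > 0" using \<open>m > 0\<close> m zero_less_mult_pos by blast
  have "m dvd q * n"
    unfolding m by (simp add: d_def)
  then have "m dvd r * n"
    using ann[of n] int_pow_eq_id[OF x] by (simp add: m_def)
  then have "d dvd r"
    using \<open>n > 0\<close> unfolding m by simp
  then obtain k where k: "r = d * k" ..
  obtain u v where uv: "u * m + v * q = d"
    unfolding d_def using bezout_int by blast
  have "x [^] r = (x [^] m) [^] (u * k) \<otimes> x [^] (q * (v * k))"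
    using x by (simp add: k uv[symmetric] int_pow_mult int_pow_pow algebra_simps)
  also have "\<dots> = (x [^] q) [^] (v * k)"
    using x by (simp add: m_def int_pow_pow int_pow_eq_id)
  finally show ?thesis by blast
qed

lemma Gpq_relations_int_pow_annihilator:
  fixes p q n :: int
  assumes c: "a \<in> carrier G" "b \<in> carrier G" "s \<in> carrier G" "t \<in> carrier G"
    and rel: "Gpq_relations G p q a b s t" and qn: "a [^] (q * n) = \<one>"
  shows "a [^] (2 * p * n) = \<one>"
proof -
  have ab: "a \<otimes> b = b \<otimes> a"
    and rel_s: "inv s \<otimes> a [^] q \<otimes> s = a [^] p \<otimes> b"
    and rel_t: "inv t \<otimes> a [^] q \<otimes> t = a [^] p \<otimes> inv b"
    using rel by (simp_all add: Gpq_relations_def)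
  define A where "A = a [^] p"
  have A: "A \<in> carrier G" using c by (simp add: A_def)
  have Ab: "A \<otimes> b = b \<otimes> A"
    unfolding A_def by (rule int_pow_commutes[OF ab c(1,2)])
  have "b [^] (- 1 :: int) \<otimes> A = A \<otimes> b [^] (- 1 :: int)"
    by (rule int_pow_commutes[OF Ab[symmetric] c(2) A])
  then have Ab_inv: "A \<otimes> inv b = inv b \<otimes> A"
    using c(2) by (simp add: int_pow_neg)
  have conj_trivial: "(inv g \<otimes> a [^] q \<otimes> g) [^] n = \<one>" if "g \<in> carrier G" for g
    using that c(1) qn by (simp add: conj_int_pow int_pow_pow)
  have "A [^] n \<otimes> b [^] n = \<one>"
    using conj_trivial[OF c(3)] A c(2)
    by (simp add: rel_s A_def[symmetric] int_pow_mult_distrib[OF Ab])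
  moreover have "A [^] n \<otimes> inv (b [^] n) = \<one>"
    using conj_trivial[OF c(4)] A c(2)
    by (simp add: rel_t A_def[symmetric] int_pow_mult_distrib[OF Ab_inv] int_pow_inv)
  then have "A [^] n = b [^] n"
    using A c(2) inv_solve_right'[of \<one> "A [^] n" "b [^] n"] by simp
  ultimately have "A [^] n \<otimes> A [^] n = \<one>" by simp
  then show ?thesis
    using c(1) by (simp add: A_def int_pow_pow int_pow_mult[symmetric] algebra_simps)
qed

lemma Gpq_relations_finite_commute:
  fixes p q :: int
  assumes fin: "finite (carrier G)"
    and c: "a \<in> carrier G" "b \<in> carrier G" "s \<in> carrier G" "t \<in> carrier G"
    and rel: "Gpq_relations G p q a b s t"
  shows "(inv s \<otimes> a [^] gcd q (2 * p) \<otimes> s) \<otimes> a = a \<otimes> (inv s \<otimes> a [^] gcd q (2 * p) \<otimes> s)"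
proof -
  have ab: "a \<otimes> b = b \<otimes> a" and rel_s: "inv s \<otimes> a [^] q \<otimes> s = a [^] p \<otimes> b"
    using rel by (simp_all add: Gpq_relations_def)
  have annihilator: "a [^] (gcd q (2 * p) * n) = \<one>" if "a [^] (q * n) = \<one>" for n
  proof -
    have "int (ord a) dvd q * n" "int (ord a) dvd 2 * p * n"
      using that Gpq_relations_int_pow_annihilator[OF c rel that] int_pow_eq_id[OF c(1)]
      by simp_all
    then show ?thesis
      using int_pow_eq_id[OF c(1)] by (metis dvd_mult2 gcd_greatest mult_gcd_right)
  qed
  have "ord a \<noteq> 0" using ord_ge_1[OF fin c(1)] by simp
  then obtain k :: int where k: "a [^] gcd q (2 * p) = (a [^] q) [^] k"
    using int_pow_in_powers_of_int_pow[OF c(1) _ annihilator] by blast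
  have "inv s \<otimes> a [^] gcd q (2 * p) \<otimes> s = (a [^] p \<otimes> b) [^] k"
    using c by (simp add: k conj_int_pow[symmetric] rel_s)
  moreover have "(a [^] p \<otimes> b) \<otimes> a = a \<otimes> (a [^] p \<otimes> b)"
  proof -
    have "a [^] p \<otimes> a = a \<otimes> a [^] p" using int_pow_commutes[of a a p] c(1) by simp
    then show ?thesis using c ab by (metis int_pow_closed m_assoc)
  qed
  ultimately show ?thesis
    using c by (simp add: int_pow_commutes)
qed

end

definition commutator_word :: "int \<Rightarrow> letter list" where
  "commutator_word g = [(GS, True)] @ gpow GA g @ [(GS, False), (GA, False), (GS, True)]
     @ gpow GA (- g) @ [(GS, False), (GA, True)]"

lemma (in group) word_val_commutator_word_eq_one_iff:
  fixes g :: int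
  assumes h: "range h \<subseteq> carrier G"
  defines "C \<equiv> inv h GS \<otimes> h GA [^] g \<otimes> h GS"
  shows "word_val G h (commutator_word g) = \<one> \<longleftrightarrow> C \<otimes> h GA = h GA \<otimes> C"
proof -
  have c: "h x \<in> carrier G" for x using h by auto
  have "word_val G h (commutator_word g) = (C \<otimes> h GA) \<otimes> inv (h GA \<otimes> C)"
    using h c
    by (simp add: commutator_word_def word_val_gpow C_def m_assoc inv_mult_group int_pow_neg)
  then show ?thesis
    using c inv_solve_right'[of \<one> "C \<otimes> h GA" "h GA \<otimes> C"] by (simp add: C_def)
qed

lemma finite_hom_image_commutator_word:
  fixes p q :: int
  assumes H: "group H" "finite (carrier H)" and \<phi>: "\<phi> \<in> hom free_grp H"
    and relators: "\<And>r. r \<in> relators p q \<Longrightarrow> \<phi> r = \<one>\<^bsub>H\<^esub>"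
  shows "\<phi> (reduce (commutator_word (gcd q (2 * p)))) = \<one>\<^bsub>H\<^esub>"
proof -
  interpret H: group H by (rule H(1))
  define h where "h g = \<phi> [(g, False)]" for g
  have h: "range h \<subseteq> carrier H"
    using \<phi> by (auto simp: h_def hom_def carrier_free_grp)
  have \<phi>_eq: "\<phi> w = word_val H h w" if "reduced w" for w
    unfolding h_def using hom_free_grp_eq_word_val[OF H(1) \<phi> that] .
  have hc: "h g \<in> carrier H" for g using h by auto
  have "Gpq_relations H p q (h GA) (h GB) (h GS) (h GT)"
    using H.word_val_relators_iff[OF h] relators relators_reduced \<phi>_eq by auto
  then have "word_val H h (commutator_word (gcd q (2 * p))) = \<one>\<^bsub>H\<^esub>"
    unfolding H.word_val_commutator_word_eq_one_iff[OF h]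
    by (rule H.Gpq_relations_finite_commute[OF H(2) hc hc hc hc])
  then show ?thesis
    using h by (simp add: \<phi>_eq)
qed

lemma finite_index_normal_subgroup_contains_commutator:
  fixes p q :: int
  assumes M: "M \<lhd> G_pq p q" and fin: "finite (rcosets\<^bsub>G_pq p q\<^esub> M)"
  shows "normal_closure free_grp (relators p q) #>\<^bsub>free_grp\<^esub> reduce (commutator_word (gcd q (2 * p)))
    \<in> M"
proof -
  interpret F: group free_grp by (rule group_free_grp)
  define N where "N = normal_closure free_grp (relators p q)"
  interpret N: normal N free_grp
    unfolding N_def by (rule F.normal_closure_normal[OF relators_subset_carrier])
  have G: "G_pq p q = free_grp Mod N" by (simp add: G_pq_def N_def)
  interpret G: group "G_pq p q" unfolding G by (rule N.factorgroup_is_group)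
  interpret M: normal M "G_pq p q" by (rule M)
  define \<pi> where "\<pi> = (\<lambda>x. M #>\<^bsub>G_pq p q\<^esub> x) \<circ> (\<lambda>w. N #>\<^bsub>free_grp\<^esub> w)"
  have \<pi>: "\<pi> \<in> hom free_grp (G_pq p q Mod M)"
    unfolding \<pi>_def by (rule hom_compose[OF N.r_coset_hom_Mod[folded G] M.r_coset_hom_Mod])
  have "\<pi> r = \<one>\<^bsub>G_pq p q Mod M\<^esub>" if "r \<in> relators p q" for r
  proof -
    have "r \<in> N" using that F.subset_normal_closure[OF relators_subset_carrier] by (auto simp: N_def)
    then have "N #>\<^bsub>free_grp\<^esub> r = \<one>\<^bsub>G_pq p q\<^esub>"
      by (simp add: G FactGroup_def N.rcos_const F.is_group)
    then show ?thesis
      by (simp add: \<pi>_def FactGroup_def M.subset)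
  qed
  then have "\<pi> (reduce (commutator_word (gcd q (2 * p)))) = \<one>\<^bsub>G_pq p q Mod M\<^esub>"
    using finite_hom_image_commutator_word[OF M.factorgroup_is_group _ \<pi>] fin
    by (simp add: FactGroup_def)
  moreover have "N #>\<^bsub>free_grp\<^esub> reduce (commutator_word (gcd q (2 * p))) \<in> carrier (G_pq p q)"
    by (simp add: G FactGroup_def RCOSETS_def carrier_free_grp) (metis reduced_reduce)
  ultimately show ?thesis
    unfolding N_def[symmetric]
    by (intro G.coset_join1[OF _ _ M.subgroup_axioms]) (simp_all add: \<pi>_def FactGroup_def)
qed

section \<open>A permutation representation of \<open>G_pq\<close>\<close>

lemma carrier_BijGroup_UNIV [simp]: "f \<in> carrier (BijGroup UNIV) \<longleftrightarrow> bij f"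
  by (simp add: BijGroup_def Bij_def)

lemma one_BijGroup_UNIV [simp]: "\<one>\<^bsub>BijGroup UNIV\<^esub> = id"
  by (simp add: BijGroup_def id_def restrict_UNIV)

lemma mult_BijGroup_UNIV [simp]: "bij f \<Longrightarrow> bij g \<Longrightarrow> f \<otimes>\<^bsub>BijGroup UNIV\<^esub> g = f \<circ> g"
  by (simp add: BijGroup_def Bij_def compose_def comp_def restrict_UNIV)

lemma inv_BijGroup_UNIV [simp]: "bij f \<Longrightarrow> inv\<^bsub>BijGroup UNIV\<^esub> f = inv_into UNIV f"
  by (simp add: inv_BijGroup Bij_def restrict_UNIV)

definition shift :: "int \<Rightarrow> int \<Rightarrow> int \<times> int \<Rightarrow> int \<times> int" where
  "shift i j v = (fst v + i, snd v + j)"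

lemma shift_shift [simp]: "shift i j \<circ> shift k l = shift (i + k) (j + l)"
  by (auto simp: shift_def)

lemma shift_0 [simp]: "shift 0 0 = id"
  by (auto simp: shift_def)

lemma bij_shift [simp]: "bij (shift i j)"
  by (rule o_bij[of "shift (- i) (- j)"]) simp_all

lemma inv_shift [simp]: "inv_into UNIV (shift i j) = shift (- i) (- j)"
  by (rule inv_unique_comp) simp_all

lemma shift_int_pow: "shift 1 0 [^]\<^bsub>BijGroup UNIV\<^esub> (k::int) = shift k 0"
proof -
  interpret B: group "BijGroup (UNIV :: (int \<times> int) set)" by (rule group_BijGroup)
  have "shift 1 0 [^]\<^bsub>BijGroup UNIV\<^esub> n = shift (int n) 0" for n
    by (induction n) (simp_all add: add.commute)
  then show ?thesis
    by (simp add: int_pow_def2)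
qed

text \<open>The orbits of the shift by \<open>(p, 1)\<close> are the lines \<open>x - p y = c\<close>; those of the shift
  by \<open>(q, 0)\<close> are indexed by \<open>(x mod |q|, y)\<close>. \<open>twist p q\<close> matches the orbits up via
  \<open>c \<mapsto> (c mod |q|, c div |q|)\<close>, respecting the position \<open>y\<close> along them, so it conjugates
  the first shift into the second.\<close>

definition twist :: "int \<Rightarrow> int \<Rightarrow> int \<times> int \<Rightarrow> int \<times> int" where
  "twist p q v = ((fst v - p * snd v) mod \<bar>q\<bar> + q * snd v, (fst v - p * snd v) div \<bar>q\<bar>)"

lemma twist_shift: "twist p q \<circ> shift (p * k) k = shift (q * k) 0 \<circ> twist p q"
  by (auto simp: twist_def shift_def algebra_simps)

definition untwist :: "int \<Rightarrow> int \<Rightarrow> int \<times> int \<Rightarrow> int \<times> int" where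
  "untwist p q v =
     (let y = sgn q * (fst v div \<bar>q\<bar>) in (snd v * \<bar>q\<bar> + fst v mod \<bar>q\<bar> + p * y, y))"

lemma twist_untwist: "q \<noteq> 0 \<Longrightarrow> twist p q (untwist p q v) = v"
proof -
  assume q: "q \<noteq> 0"
  obtain u w where v: "v = (u, w)" by (cases v)
  have "q * sgn q = \<bar>q\<bar>" by (simp add: abs_sgn)
  then have "u mod \<bar>q\<bar> + q * (sgn q * (u div \<bar>q\<bar>)) = u" by (simp add: mult.assoc[symmetric])
  moreover have "(w * \<bar>q\<bar> + u mod \<bar>q\<bar>) mod \<bar>q\<bar> = u mod \<bar>q\<bar>"
    and "(w * \<bar>q\<bar> + u mod \<bar>q\<bar>) div \<bar>q\<bar> = w"
    using q by simp_all
  ultimately show ?thesis by (simp add: twist_def untwist_def v Let_def)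
qed

lemma untwist_twist: "q \<noteq> 0 \<Longrightarrow> untwist p q (twist p q v) = v"
proof -
  assume q: "q \<noteq> 0"
  obtain x y where v: "v = (x, y)" by (cases v)
  define c where "c = x - p * y"
  have qy: "q * y = \<bar>q\<bar> * (sgn q * y)" by (simp add: mult.assoc[symmetric] abs_mult_sgn)
  have "(c mod \<bar>q\<bar> + q * y) div \<bar>q\<bar> = sgn q * y"
    and "(c mod \<bar>q\<bar> + q * y) mod \<bar>q\<bar> = c mod \<bar>q\<bar>"
    using q unfolding qy by simp_all
  moreover have "sgn q * (sgn q * y) = y" using q by (simp add: mult.assoc[symmetric] sgn_if)
  moreover have "c + p * y = x" by (simp add: c_def)
  ultimately show ?thesis using q by (simp add: twist_def untwist_def v Let_def c_def[symmetric])
qed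

lemma bij_twist: "q \<noteq> 0 \<Longrightarrow> bij (twist p q)"
  by (rule o_bij[of "untwist p q"]) (simp_all add: fun_eq_iff twist_untwist untwist_twist)

lemma bij_untwist: "q \<noteq> 0 \<Longrightarrow> bij (untwist p q)"
  by (rule o_bij[of "twist p q"]) (simp_all add: fun_eq_iff twist_untwist untwist_twist)

lemma inv_twist: "q \<noteq> 0 \<Longrightarrow> inv_into UNIV (twist p q) = untwist p q"
  by (rule inv_unique_comp) (simp_all add: fun_eq_iff twist_untwist untwist_twist)

lemma twist_fixed: "0 \<le> c \<Longrightarrow> c < \<bar>q\<bar> \<Longrightarrow> twist p q (c, 0) = (c, 0)"
  by (simp add: twist_def)

lemma untwist_fixed: "0 \<le> c \<Longrightarrow> c < \<bar>q\<bar> \<Longrightarrow> untwist p q (c, 0) = (c, 0)"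
  by (simp add: untwist_def)

lemma untwist_abs: "q \<noteq> 0 \<Longrightarrow> untwist p q (\<bar>q\<bar>, 0) = (p * sgn q, sgn q)"
  by (simp add: untwist_def Let_def)

definition perm_gens :: "int \<Rightarrow> int \<Rightarrow> gen \<Rightarrow> int \<times> int \<Rightarrow> int \<times> int" where
  "perm_gens p q g =
     (case g of GA \<Rightarrow> shift 1 0 | GB \<Rightarrow> shift 0 1 | GS \<Rightarrow> twist p q | GT \<Rightarrow> twist (- p) (- q))"

lemma perm_gens_simps [simp]:
  "perm_gens p q GA = shift 1 0" "perm_gens p q GB = shift 0 1"
  "perm_gens p q GS = twist p q" "perm_gens p q GT = twist (- p) (- q)"
  by (simp_all add: perm_gens_def)

lemma range_perm_gens: "q \<noteq> 0 \<Longrightarrow> range (perm_gens p q) \<subseteq> carrier (BijGroup UNIV)"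
  by (auto simp: perm_gens_def bij_twist split: gen.splits)

lemma Gpq_relations_perm_gens:
  assumes q: "q \<noteq> 0"
  shows "Gpq_relations (BijGroup UNIV) p q (shift 1 0) (shift 0 1) (twist p q) (twist (- p) (- q))"
proof -
  let ?B = "BijGroup (UNIV :: (int \<times> int) set)"
  interpret B: group ?B by (rule group_BijGroup)
  have "twist p q \<circ> shift p 1 = shift q 0 \<circ> twist p q"
    using twist_shift[of p q 1] by simp
  then have rel_s: "inv\<^bsub>?B\<^esub> twist p q \<otimes>\<^bsub>?B\<^esub> shift 1 0 [^]\<^bsub>?B\<^esub> q \<otimes>\<^bsub>?B\<^esub> twist p q
      = shift 1 0 [^]\<^bsub>?B\<^esub> p \<otimes>\<^bsub>?B\<^esub> shift 0 1"
    using q by (subst B.conj_eq_iff) (simp_all add: bij_twist shift_int_pow)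
  have "twist (- p) (- q) \<circ> shift p (- 1) = shift q 0 \<circ> twist (- p) (- q)"
    using twist_shift[of "- p" "- q" "- 1"] by simp
  then have rel_t: "inv\<^bsub>?B\<^esub> twist (- p) (- q) \<otimes>\<^bsub>?B\<^esub> shift 1 0 [^]\<^bsub>?B\<^esub> q \<otimes>\<^bsub>?B\<^esub> twist (- p) (- q)
      = shift 1 0 [^]\<^bsub>?B\<^esub> p \<otimes>\<^bsub>?B\<^esub> inv\<^bsub>?B\<^esub> shift 0 1"
    using q by (subst B.conj_eq_iff) (simp_all add: bij_twist shift_int_pow)
  show ?thesis
    using rel_s rel_t by (simp add: Gpq_relations_def)
qed

lemma perm_gens_commutator_word_ne_one:
  fixes p q g :: int
  assumes q: "q \<noteq> 0" and g: "0 < g" "g < \<bar>q\<bar>"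
  shows "word_val (BijGroup UNIV) (perm_gens p q) (commutator_word g) \<noteq> \<one>\<^bsub>BijGroup UNIV\<^esub>"
proof -
  interpret B: group "BijGroup (UNIV :: (int \<times> int) set)" by (rule group_BijGroup)
  define C where "C = untwist p q \<circ> shift g 0 \<circ> twist p q"
  have "C (shift 1 0 (\<bar>q\<bar> - 1 - g, 0)) = (p * sgn q, sgn q)"
    using q g by (simp add: C_def shift_def twist_fixed untwist_abs)
  moreover have "shift 1 0 (C (\<bar>q\<bar> - 1 - g, 0)) = (\<bar>q\<bar>, 0)"
    using g by (simp add: C_def shift_def twist_fixed untwist_fixed)
  ultimately have "C \<circ> shift 1 0 \<noteq> shift 1 0 \<circ> C"
    using q by (metis comp_apply prod.inject sgn_0_0)
  then show ?thesis
    unfolding B.word_val_commutator_word_eq_one_iff[OF range_perm_gens[OF q]]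
    using q by (simp add: bij_twist bij_untwist bij_comp inv_twist shift_int_pow C_def comp_assoc)
qed

lemma commutator_word_not_in_normal_closure:
  fixes p q g :: int
  assumes q: "q \<noteq> 0" and g: "0 < g" "g < \<bar>q\<bar>"
  shows "reduce (commutator_word g) \<notin> normal_closure free_grp (relators p q)"
proof
  interpret F: group free_grp by (rule group_free_grp)
  define \<psi> where "\<psi> = word_val (BijGroup UNIV) (perm_gens p q)"
  interpret \<psi>: group_hom free_grp "BijGroup UNIV" \<psi>
    unfolding \<psi>_def group_hom_def group_hom_axioms_def
    using group_BijGroup group.word_val_hom[OF group_BijGroup range_perm_gens[OF q]] F.is_group
    by blast
  have "relators p q \<subseteq> kernel free_grp (BijGroup UNIV) \<psi>"
    using group.word_val_relators_iff[OF group_BijGroup range_perm_gens[OF q, of p], of p q]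
      Gpq_relations_perm_gens[OF q, of p] relators_subset_carrier[of p q]
    by (auto simp: kernel_def \<psi>_def)
  then have "normal_closure free_grp (relators p q) \<subseteq> kernel free_grp (BijGroup UNIV) \<psi>"
    by (rule F.normal_closure_subset_normal[OF \<psi>.normal_kernel])
  moreover assume "reduce (commutator_word g) \<in> normal_closure free_grp (relators p q)"
  ultimately have "\<psi> (reduce (commutator_word g)) = \<one>\<^bsub>BijGroup UNIV\<^esub>"
    by (auto simp: kernel_def)
  then show False
    using perm_gens_commutator_word_ne_one[OF q g, of p]
      group.word_val_reduce[OF group_BijGroup range_perm_gens[OF q]]
    by (simp add: \<psi>_def)
qed

lemma rcoset_normal_closure_ne_one:
  assumes "reduced w" "w \<notin> normal_closure free_grp (relators p q)"
  shows "normal_closure free_grp (relators p q) #>\<^bsub>free_grp\<^esub> w \<in> carrier (G_pq p q)"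
    and "normal_closure free_grp (relators p q) #>\<^bsub>free_grp\<^esub> w \<noteq> \<one>\<^bsub>G_pq p q\<^esub>"
proof -
  interpret F: group free_grp by (rule group_free_grp)
  interpret N: normal "normal_closure free_grp (relators p q)" free_grp
    by (rule F.normal_closure_normal[OF relators_subset_carrier])
  have w: "w \<in> carrier free_grp" using assms(1) by (simp add: carrier_free_grp)
  then show "normal_closure free_grp (relators p q) #>\<^bsub>free_grp\<^esub> w \<in> carrier (G_pq p q)"
    by (auto simp: G_pq_def FactGroup_def RCOSETS_def)
  show "normal_closure free_grp (relators p q) #>\<^bsub>free_grp\<^esub> w \<noteq> \<one>\<^bsub>G_pq p q\<^esub>"
    using F.coset_join1[OF _ w N.subgroup_axioms] assms(2) by (auto simp: G_pq_def FactGroup_def)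
qed

lemma gcd_less_abs_if_not_dvd:
  fixes q r :: int
  assumes "q \<noteq> 0" "\<not> q dvd r"
  shows "gcd q r < \<bar>q\<bar>"
proof -
  have "gcd q r \<le> \<bar>q\<bar>" using assms(1) by (simp add: zdvd_imp_le)
  moreover have "gcd q r \<noteq> \<bar>q\<bar>" using assms(2) by (metis gcd_dvd2 abs_dvd_iff)
  ultimately show ?thesis by simp
qed

theorem theorem3p3:
  fixes p q :: int
  assumes "p \<noteq> 0" and "q \<noteq> 0" and "\<not> q dvd 2 * p"
  shows "\<not> residually_finite (G_pq p q)"
proof
  assume "residually_finite (G_pq p q)"
  define x where "x = normal_closure free_grp (relators p q)
    #>\<^bsub>free_grp\<^esub> reduce (commutator_word (gcd q (2 * p)))"
  have "reduce (commutator_word (gcd q (2 * p))) \<notin> normal_closure free_grp (relators p q)"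
    using assms(2,3) gcd_less_abs_if_not_dvd
    by (intro commutator_word_not_in_normal_closure) simp_all
  then have "x \<in> carrier (G_pq p q)" "x \<noteq> \<one>\<^bsub>G_pq p q\<^esub>"
    unfolding x_def by (simp_all add: rcoset_normal_closure_ne_one)
  then obtain M where "M \<lhd> G_pq p q" "finite (rcosets\<^bsub>G_pq p q\<^esub> M)" "x \<notin> M"
    using \<open>residually_finite (G_pq p q)\<close> unfolding residually_finite_def by blast
  then show False
    using finite_index_normal_subgroup_contains_commutator unfolding x_def by blast
qed

end
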